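(* Let $n\ge 1$ and let $c_1(Q_n)$ be the exponent (largest invariant factor) of the sandpile group $K(Q_n)$ of the $n$-dimensional hypercube. Then $c_1(Q_n)$ is the minimum positive integer $C$ such that for all integers $a,b$ with $2\le a\le n$ and $1\le b\le a$, $$\frac{C}{2^{n-a}}\sum_{i=0}^{n-a}\frac{\binom{n-a}{i}}{2(b+i)}\in\mathbb{Z}.$$
   Context: $Q_n$ is the graph with vertex set $\mathbb{F}_2^n$ in which $u,w$ are adjacent iff they differ in exactly one coordinate. Its Laplacian is $L=D-A$, and $\operatorname{coker}(L:\mathbb{Z}^{2^n}\to\mathbb{Z}^{2^n})\cong\mathbb{Z}\oplus K(Q_n)$ with $K(Q_n)$ finite abelian (the sandpile group); the exponent of the trivial group is $1$. *)

theory Defs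
  imports Complex_Main
begin

text \<open>Vertices of Q_n: F_2^n, encoded as subsets of {0..<n} (indicator vectors).\<close>

definition hyp_vertices :: "nat \<Rightarrow> nat set set" where
  "hyp_vertices n = Pow {..<n}"

definition hyp_adj :: "nat set \<Rightarrow> nat set \<Rightarrow> bool" where
  "hyp_adj u w \<longleftrightarrow> card ((u - w) \<union> (w - u)) = 1"

definition hyp_laplacian :: "nat \<Rightarrow> (nat set \<Rightarrow> int) \<Rightarrow> nat set \<Rightarrow> int" where
  "hyp_laplacian n f u =
     int (card {w \<in> hyp_vertices n. hyp_adj u w}) * f u
     - (\<Sum>w\<in>{w \<in> hyp_vertices n. hyp_adj u w}. f w)"

definition in_lap_image :: "nat \<Rightarrow> (nat set \<Rightarrow> int) \<Rightarrow> bool" where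
  "in_lap_image n x \<longleftrightarrow>
     (\<exists>f. \<forall>u\<in>hyp_vertices n. x u = hyp_laplacian n f u)"

text \<open>The class of x in coker L is a torsion element; the torsion subgroup of
  coker L = Z + K(Q_n) is (isomorphic to) the sandpile group K(Q_n).\<close>

definition coker_torsion :: "nat \<Rightarrow> (nat set \<Rightarrow> int) \<Rightarrow> bool" where
  "coker_torsion n x \<longleftrightarrow> (\<exists>m::nat. m > 0 \<and> in_lap_image n (\<lambda>u. int m * x u))"

definition sandpile_exponent :: "nat \<Rightarrow> nat" where
  "sandpile_exponent n =
     (LEAST e::nat. e > 0 \<and>
        (\<forall>x. coker_torsion n x \<longrightarrow> in_lap_image n (\<lambda>u. int e * x u)))"

definition exp_condition :: "nat \<Rightarrow> nat \<Rightarrow> bool" where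
  "exp_condition n C \<longleftrightarrow> C > 0 \<and>
     (\<forall>a b::nat. 2 \<le> a \<and> a \<le> n \<and> 1 \<le> b \<and> b \<le> a \<longrightarrow>
        (of_nat C / 2 ^ (n - a)) *
        (\<Sum>i=0..n-a. of_nat ((n - a) choose i) / (2 * of_nat (b + i))) \<in> (\<int> :: rat set))"

end

theory Submission
  imports Defs
begin

(*
  Q_n has an explicit rational Green function G(u, w) = g(d(u, w)), depending only on the Hamming
  distance, with L G(u, -) = delta_u - 2^-n.  Hence a vector x of sum zero satisfies
  x = L (sum_t x_t G(t, -)), and C kills K(Q_n) exactly when C times every cross difference
  G(u, w) - G(v, w) - G(u, w') + G(v, w') is an integer.  Walking along cube edges reduces this to
  adjacent pairs u, v and w, w', where the cross differences are +-2 (g(d) - g(d+1)) or +- second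
  differences of g.  The increments g(d) - g(d+1) form a table obeying a Pascal-type recursion, so
  all these conditions are equivalent to integrality on its first row; the binomial sums of the
  theorem obey another Pascal recursion with the same first row, which gives the same condition.
*)

section \<open>The Laplacian of the hypercube\<close>

definition flip :: "nat set \<Rightarrow> nat \<Rightarrow> nat set" where
  "flip u i = (if i \<in> u then u - {i} else insert i u)"

lemma flip_flip [simp]: "flip (flip u i) i = u"
  by (auto simp: flip_def)

lemma inj_flip: "inj (flip u)"
  by (rule injI) (auto simp: flip_def split: if_splits)

lemma flip_in_hyp_vertices: "u \<in> hyp_vertices n \<Longrightarrow> i < n \<Longrightarrow> flip u i \<in> hyp_vertices n"
  by (auto simp: flip_def hyp_vertices_def)

lemma finite_hyp_vertices [simp]: "finite (hyp_vertices n)"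
  by (simp add: hyp_vertices_def)

lemma empty_in_hyp_vertices: "{} \<in> hyp_vertices n"
  by (simp add: hyp_vertices_def)

lemma sym_diff_flip_left: "sym_diff (flip u i) w = flip (sym_diff u w) i"
  by (auto simp: flip_def)

lemma sym_diff_flip_right: "sym_diff u (flip w i) = flip (sym_diff u w) i"
  by (auto simp: flip_def)

lemma sym_diff_eq_singleton_iff: "sym_diff u w = {i} \<longleftrightarrow> w = flip u i"
proof
  assume "sym_diff u w = {i}"
  then have "x \<in> w \<longleftrightarrow> (x \<in> u \<longleftrightarrow> x \<noteq> i)" for x
    by (auto simp: set_eq_iff)
  then show "w = flip u i" by (auto simp: flip_def)
qed (auto simp: flip_def)

lemma sym_diff_subset_hyp:
  "u \<in> hyp_vertices n \<Longrightarrow> w \<in> hyp_vertices n \<Longrightarrow> sym_diff u w \<subseteq> {..<n}"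
  by (auto simp: hyp_vertices_def)

lemma card_flip: "finite s \<Longrightarrow> card (flip s i) = (if i \<in> s then card s - 1 else Suc (card s))"
  by (auto simp: flip_def)

lemma hyp_adj_iff_flip:
  assumes "u \<in> hyp_vertices n" "w \<in> hyp_vertices n"
  shows "hyp_adj u w \<longleftrightarrow> (\<exists>i<n. w = flip u i)"
proof
  assume "hyp_adj u w"
  then obtain i where i: "sym_diff u w = {i}"
    by (auto simp: hyp_adj_def card_1_singleton_iff)
  then have "i < n" using sym_diff_subset_hyp[OF assms] by auto
  with i show "\<exists>i<n. w = flip u i" using sym_diff_eq_singleton_iff by blast
next
  assume "\<exists>i<n. w = flip u i"
  then obtain i where "sym_diff u w = {i}" using sym_diff_eq_singleton_iff by blast
  then show "hyp_adj u w" by (simp add: hyp_adj_def)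
qed

lemma hyp_neighbours:
  "u \<in> hyp_vertices n \<Longrightarrow> {w \<in> hyp_vertices n. hyp_adj u w} = flip u ` {..<n}"
  using hyp_adj_iff_flip flip_in_hyp_vertices by auto

lemma hyp_vertices_path_induct [consumes 2, case_names refl step trans]:
  assumes "u \<in> hyp_vertices n" "w \<in> hyp_vertices n"
    and refl: "\<And>u. P u u"
    and step: "\<And>u i. u \<in> hyp_vertices n \<Longrightarrow> i < n \<Longrightarrow> P u (flip u i)"
    and trans: "\<And>u v w. P u v \<Longrightarrow> P v w \<Longrightarrow> P u w"
  shows "P u w"
  using assms(1,2)
proof (induction "card (sym_diff u w)" arbitrary: u)
  case 0
  have "finite (sym_diff u w)"
    using sym_diff_subset_hyp[OF 0(2,3)] finite_subset by blast
  with 0 have "u = w" by auto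
  then show ?case using refl by simp
next
  case (Suc k)
  have fin: "finite (sym_diff u w)"
    using sym_diff_subset_hyp[OF Suc.prems] finite_subset by blast
  obtain i where i: "i \<in> sym_diff u w"
    using Suc.hyps(2) by (metis card.empty ex_in_conv nat.distinct(1))
  have "i < n" using i sym_diff_subset_hyp[OF Suc.prems] by auto
  have "card (sym_diff (flip u i) w) = k"
    using Suc.hyps(2) i fin by (simp add: sym_diff_flip_left card_flip)
  then have "P (flip u i) w"
    using Suc.hyps(1) flip_in_hyp_vertices[OF Suc.prems(1) \<open>i < n\<close>] Suc.prems(2) by blast
  then show ?case using trans step[OF Suc.prems(1) \<open>i < n\<close>] by blast
qed

definition lap :: "nat \<Rightarrow> (nat set \<Rightarrow> 'a::comm_ring_1) \<Rightarrow> nat set \<Rightarrow> 'a" where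
  "lap n h u = of_nat n * h u - (\<Sum>i<n. h (flip u i))"

lemma hyp_laplacian_eq_lap: "u \<in> hyp_vertices n \<Longrightarrow> hyp_laplacian n f u = lap n f u"
  unfolding hyp_laplacian_def hyp_neighbours lap_def
  by (simp add: card_image sum.reindex inj_on_subset[OF inj_flip])

lemma of_int_lap: "of_int (lap n f u) = lap n (\<lambda>w. of_int (f w)) u"
  by (simp add: lap_def)

lemma lap_cong:
  "u \<in> hyp_vertices n \<Longrightarrow> (\<And>w. w \<in> hyp_vertices n \<Longrightarrow> h w = h' w) \<Longrightarrow> lap n h u = lap n h' u"
  unfolding lap_def using flip_in_hyp_vertices by (auto intro!: sum.cong)

lemma lap_diff: "lap n (\<lambda>w. h w - h' w) u = lap n h u - lap n h' u"
  by (simp add: lap_def sum_subtractf algebra_simps)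

lemma lap_linear_combination:
  "lap n (\<lambda>w. (\<Sum>t\<in>A. a t * h t w) - K) u = (\<Sum>t\<in>A. a t * lap n (h t) u)"
proof -
  have "(\<Sum>i<n. \<Sum>t\<in>A. a t * h t (flip u i)) = (\<Sum>t\<in>A. \<Sum>i<n. a t * h t (flip u i))"
    by (rule sum.swap)
  then show ?thesis
    by (simp add: lap_def sum_subtractf algebra_simps sum_distrib_left)
qed

lemma sum_flip_hyp_vertices:
  "i < n \<Longrightarrow> (\<Sum>u\<in>hyp_vertices n. g (flip u i)) = (\<Sum>u\<in>hyp_vertices n. g u)"
  by (rule sum.reindex_bij_witness[where i="\<lambda>u. flip u i" and j="\<lambda>u. flip u i"])
    (auto intro: flip_in_hyp_vertices)

lemma lap_self_adjoint:
  "(\<Sum>u\<in>hyp_vertices n. lap n h u * h' u) = (\<Sum>u\<in>hyp_vertices n. h u * lap n h' u)"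
proof -
  let ?V = "hyp_vertices n"
  have "(\<Sum>u\<in>?V. \<Sum>i<n. h (flip u i) * h' u) = (\<Sum>i<n. \<Sum>u\<in>?V. h (flip u i) * h' u)"
    by (rule sum.swap)
  also have "\<dots> = (\<Sum>i<n. \<Sum>u\<in>?V. h u * h' (flip u i))"
  proof (rule sum.cong)
    fix i assume "i \<in> {..<n}"
    then show "(\<Sum>u\<in>?V. h (flip u i) * h' u) = (\<Sum>u\<in>?V. h u * h' (flip u i))"
      using sum_flip_hyp_vertices[of i n "\<lambda>u. h (flip u i) * h' u"] by simp
  qed simp
  also have "\<dots> = (\<Sum>u\<in>?V. \<Sum>i<n. h u * h' (flip u i))"
    by (rule sum.swap)
  finally show ?thesis
    by (simp add: lap_def algebra_simps sum_subtractf sum_distrib_left sum_distrib_right)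
qed

lemma sum_lap_eq_0: "(\<Sum>u\<in>hyp_vertices n. lap n h u) = 0"
  using lap_self_adjoint[of n h "\<lambda>_. 1"] by (simp add: lap_def)

section \<open>The Green function\<close>

(* half_beta a b is the integral of x^b (1 - x)^a over [1/2, 1]; half_beta_parts is integration by parts. *)
fun half_beta :: "nat \<Rightarrow> nat \<Rightarrow> rat" where
  "half_beta 0 b = (2 ^ (b + 1) - 1) / (of_nat (b + 1) * 2 ^ (b + 1))"
| "half_beta (Suc a) b = half_beta a b - half_beta a (Suc b)"

declare half_beta.simps(1) [simp del]

lemma half_beta_0_mult: "of_nat (b + 1) * half_beta 0 b = 1 - 1 / 2 ^ (b + 1)"
proof -
  have cancel: "c \<noteq> 0 \<Longrightarrow> x \<noteq> 0 \<Longrightarrow> c * ((x - 1) / (c * x)) = 1 - 1 / x" for c x :: rat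
    by (simp add: field_simps)
  show ?thesis unfolding half_beta.simps(1) by (rule cancel) simp_all
qed

lemma half_beta_parts:
  "of_nat (b + 1) * half_beta (Suc a) b - of_nat (a + 1) * half_beta a (Suc b) = - 1 / 2 ^ (a + b + 2)"
proof (induction a arbitrary: b)
  case 0
  have "of_nat (b + 1) * half_beta 1 b - half_beta 0 (Suc b)
      = of_nat (b + 1) * half_beta 0 b - of_nat (Suc b + 1) * half_beta 0 (Suc b)"
    by (simp add: algebra_simps)
  also have "\<dots> = - 1 / 2 ^ (b + 2)"
    unfolding half_beta_0_mult by simp
  finally show ?case by simp
next
  case (Suc a)
  have "of_nat (b + 1) * half_beta (Suc (Suc a)) b - of_nat (Suc a + 1) * half_beta (Suc a) (Suc b)
      = (of_nat (b + 1) * half_beta (Suc a) b - of_nat (a + 1) * half_beta a (Suc b))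
        - (of_nat (Suc b + 1) * half_beta (Suc a) (Suc b) - of_nat (a + 1) * half_beta a (Suc (Suc b)))"
    by (simp add: algebra_simps)
  also have "\<dots> = - 1 / 2 ^ (a + b + 2) + 1 / 2 ^ (a + b + 3)"
    using Suc[of b] Suc[of "Suc b"] by (simp add: numeral_eq_Suc)
  also have "\<dots> = - 1 / 2 ^ (Suc a + b + 2)"
    by (simp add: numeral_eq_Suc)
  finally show ?case .
qed

lemma half_beta_first_column: "of_nat (a + 1) * half_beta a 0 = 1 / 2 ^ (a + 1)"
proof (induction a)
  case (Suc a)
  have "of_nat (Suc a + 1) * half_beta (Suc a) 0
      = of_nat (a + 1) * half_beta a 0 + (of_nat (0 + 1) * half_beta (Suc a) 0 - of_nat (a + 1) * half_beta a 1)"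
    by (simp add: algebra_simps)
  also have "\<dots> = 1 / 2 ^ (a + 1) - 1 / 2 ^ (a + 2)"
    using Suc half_beta_parts[of 0 a] by simp
  finally show ?case by simp
qed (simp add: half_beta.simps(1))

definition green_step :: "nat \<Rightarrow> nat \<Rightarrow> rat" where
  "green_step n d = half_beta d (n - 1 - d)"

definition green_radial :: "nat \<Rightarrow> nat \<Rightarrow> rat" where
  "green_radial n k = - (\<Sum>d<k. green_step n d)"

definition green :: "nat \<Rightarrow> nat set \<Rightarrow> nat set \<Rightarrow> rat" where
  "green n u w = green_radial n (card (sym_diff u w))"

lemma green_radial_0 [simp]: "green_radial n 0 = 0"
  by (simp add: green_radial_def)

lemma green_radial_Suc: "green_radial n (Suc k) = green_radial n k - green_step n k"
  by (simp add: green_radial_def)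

lemma green_commute: "green n u w = green n w u"
  by (simp add: green_def Un_commute)

lemma green_radial_laplace:
  assumes "n \<ge> 1" "k \<le> n"
  shows "of_nat n * green_radial n k - of_nat k * green_radial n (k - 1)
           - of_nat (n - k) * green_radial n (Suc k)
         = (if k = 0 then 1 else 0) - 1 / 2 ^ n"
proof (cases k)
  case 0
  then show ?thesis
    using assms half_beta_0_mult[of "n - 1"] by (simp add: green_radial_Suc green_step_def)
next
  case (Suc d)
  have "of_nat n * green_radial n k - of_nat k * green_radial n (k - 1)
          - of_nat (n - k) * green_radial n (Suc k)
        = of_nat (n - k) * green_step n k - of_nat k * green_step n d"
    using Suc assms by (simp add: green_radial_Suc algebra_simps of_nat_diff)
  also have "\<dots> = - 1 / 2 ^ n"
  proof (cases "k = n")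
    case True
    then show ?thesis
      using Suc half_beta_first_column[of d] by (simp add: green_step_def)
  next
    case False
    then have "n - 1 - k + 1 = n - k" "Suc (n - 1 - k) = n - 1 - d" "d + (n - 1 - k) + 2 = n"
      using Suc assms by auto
    then have "of_nat (n - k) * half_beta k (n - 1 - k) - of_nat k * half_beta d (n - 1 - d) = - 1 / 2 ^ n"
      using Suc half_beta_parts[of "n - 1 - k" d] by (simp only: Suc_eq_plus1)
    then show ?thesis
      by (simp add: green_step_def)
  qed
  finally show ?thesis using Suc by simp
qed

lemma sum_flip_card:
  fixes F :: "nat \<Rightarrow> 'a::comm_semiring_1"
  assumes "s \<subseteq> {..<n}"
  shows "(\<Sum>i<n. F (card (flip s i)))
         = of_nat (card s) * F (card s - 1) + of_nat (n - card s) * F (Suc (card s))"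
proof -
  have fin: "finite s" using assms finite_subset by blast
  have "(\<Sum>i<n. F (card (flip s i))) = (\<Sum>i\<in>s. F (card s - 1)) + (\<Sum>i\<in>{..<n} - s. F (Suc (card s)))"
    using sum.subset_diff[OF assms, of "\<lambda>i. F (card (flip s i))"] fin
    by (simp add: card_flip add.commute)
  moreover have "card ({..<n} - s) = n - card s"
    using card_Diff_subset[OF fin assms] by simp
  ultimately show ?thesis by simp
qed

lemma lap_green:
  assumes "n \<ge> 1" "u \<in> hyp_vertices n" "w \<in> hyp_vertices n"
  shows "lap n (green n u) w = (if w = u then 1 else 0) - 1 / 2 ^ n"
proof -
  define s where "s = sym_diff u w"
  have s: "s \<subseteq> {..<n}" using sym_diff_subset_hyp[OF assms(2,3)] by (simp add: s_def)
  then have "card s \<le> n" using card_mono[OF finite_lessThan s] by simp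
  have "card s = 0 \<longleftrightarrow> w = u"
    using finite_subset[OF s] by (auto simp: s_def)
  have "lap n (green n u) w = of_nat n * green_radial n (card s) - (\<Sum>i<n. green_radial n (card (flip s i)))"
    by (simp add: lap_def green_def sym_diff_flip_right s_def)
  also have "\<dots> = of_nat n * green_radial n (card s) - of_nat (card s) * green_radial n (card s - 1)
                   - of_nat (n - card s) * green_radial n (Suc (card s))"
    unfolding sum_flip_card[OF s] by (simp only: diff_diff_add)
  also have "\<dots> = (if w = u then 1 else 0) - 1 / 2 ^ n"
    by (simp only: green_radial_laplace[OF assms(1) \<open>card s \<le> n\<close>] \<open>card s = 0 \<longleftrightarrow> w = u\<close>)
  finally show ?thesis .
qed

section \<open>Integrality of cross differences\<close>

definition green_cross :: "nat \<Rightarrow> nat set \<Rightarrow> nat set \<Rightarrow> nat set \<Rightarrow> nat set \<Rightarrow> rat" where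
  "green_cross n u v w w' = green n u w - green n v w - green n u w' + green n v w'"

definition green_cross_integral :: "nat \<Rightarrow> rat \<Rightarrow> bool" where
  "green_cross_integral n c \<longleftrightarrow>
     (\<forall>u\<in>hyp_vertices n. \<forall>v\<in>hyp_vertices n. \<forall>w\<in>hyp_vertices n. \<forall>w'\<in>hyp_vertices n.
        c * green_cross n u v w w' \<in> \<int>)"

definition green_step_integral :: "nat \<Rightarrow> rat \<Rightarrow> bool" where
  "green_step_integral n c \<longleftrightarrow>
     (\<forall>d<n. c * (2 * green_step n d) \<in> \<int>) \<and>
     (\<forall>d. d + 2 \<le> n \<longrightarrow> c * (green_step n d - green_step n (Suc d)) \<in> \<int>)"

lemma green_step_integral_if_green_cross_integral:
  assumes "green_cross_integral n c"
  shows "green_step_integral n c"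
  unfolding green_step_integral_def
proof (intro conjI allI impI)
  fix d assume d: "d < n"
  have V: "{} \<in> hyp_vertices n" "{n - 1} \<in> hyp_vertices n" "{..<d} \<in> hyp_vertices n"
    "insert (n - 1) {..<d} \<in> hyp_vertices n"
    using d by (auto simp: hyp_vertices_def)
  have "n - 1 \<notin> {..<d}" using d by auto
  then have "green_cross n {} {n - 1} {..<d} (insert (n - 1) {..<d}) = 2 * green_step n d"
    by (simp add: green_cross_def green_def green_radial_Suc insert_Diff_if)
  then show "c * (2 * green_step n d) \<in> \<int>"
    using assms(1) V unfolding green_cross_integral_def by metis
next
  fix d assume d: "d + 2 \<le> n"
  have V: "{} \<in> hyp_vertices n" "{n - 1} \<in> hyp_vertices n" "{..<d} \<in> hyp_vertices n"
    "insert (n - 2) {..<d} \<in> hyp_vertices n"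
    using d by (auto simp: hyp_vertices_def)
  have "n - 1 \<notin> {..<d}" "n - 2 \<notin> {..<d}" "n - 1 \<noteq> n - 2" using d by auto
  then have "green_cross n {} {n - 1} {..<d} (insert (n - 2) {..<d}) = green_step n d - green_step n (Suc d)"
    by (simp add: green_cross_def green_def green_radial_Suc insert_Diff_if)
  then show "c * (green_step n d - green_step n (Suc d)) \<in> \<int>"
    using assms(1) V unfolding green_cross_integral_def by metis
qed

lemma green_radial_flip_diff:
  "finite s \<Longrightarrow> green_radial n (card (flip s i)) - green_radial n (card s)
     = (if i \<in> s then green_step n (card s - 1) else - green_step n (card s))"
  by (cases "card s") (auto simp: card_flip green_radial_Suc)

lemma card_less_if_notin:
  assumes "s \<subseteq> {..<n}" "i \<notin> s" "i < n"
  shows "card s < n"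
proof -
  have "card (insert i s) \<le> n"
    using assms card_mono[of "{..<n}" "insert i s"] by simp
  then show ?thesis
    using assms finite_subset by fastforce
qed

lemma green_step_integral_consecutive:
  assumes "green_step_integral n c" "a < n" "b < n" "a = Suc b \<or> b = Suc a"
  shows "c * (green_step n a - green_step n b) \<in> \<int>"
proof -
  have "c * (green_step n d - green_step n (Suc d)) \<in> \<int>" if "d + 2 \<le> n" for d
    using assms(1) that by (simp add: green_step_integral_def)
  then show ?thesis
    using assms(2-4) Ints_minus[of "c * (green_step n b - green_step n a)"]
    by (auto simp: algebra_simps)
qed

lemma green_radial_flip_twice_integral:
  assumes "green_step_integral n c" "s \<subseteq> {..<n}" "i < n"
  shows "c * (2 * (green_radial n (card (flip s i)) - green_radial n (card s))) \<in> \<int>"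
proof -
  have fin: "finite s" using assms(2) finite_subset by blast
  have twice: "c * (2 * green_step n d) \<in> \<int>" if "d < n" for d
    using assms(1) that by (simp add: green_step_integral_def)
  show ?thesis
  proof (cases "i \<in> s")
    case True
    then have "card s - 1 < n"
      using card_mono[OF finite_lessThan assms(2)] card_gt_0_iff[of s] fin by auto
    then show ?thesis
      using True twice green_radial_flip_diff[OF fin, of n i] by simp
  next
    case False
    then show ?thesis
      using card_less_if_notin[OF assms(2) False assms(3)] twice green_radial_flip_diff[OF fin, of n i]
      by simp
  qed
qed

lemma green_radial_flip_flip_integral:
  assumes "green_step_integral n c" "s \<subseteq> {..<n}" "i < n" "j < n" "i \<noteq> j"
  shows "c * ((green_radial n (card (flip (flip s i) j)) - green_radial n (card (flip s i)))
              - (green_radial n (card (flip s j)) - green_radial n (card s))) \<in> \<int>"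
proof -
  define k where "k = card s"
  have fin: "finite s" "finite (flip s i)"
    using assms(2) finite_subset by (auto simp: flip_def)
  have "j \<in> flip s i \<longleftrightarrow> j \<in> s" using assms(5) by (auto simp: flip_def)
  then have "(green_radial n (card (flip (flip s i) j)) - green_radial n (card (flip s i)))
              - (green_radial n (card (flip s j)) - green_radial n (card s))
      = (if j \<in> s then green_step n (card (flip s i) - 1) - green_step n (k - 1)
         else green_step n k - green_step n (card (flip s i)))"
    using green_radial_flip_diff[OF fin(1), of n j] green_radial_flip_diff[OF fin(2), of n j]
    by (simp add: k_def)
  moreover have "card (flip s i) = (if i \<in> s then k - 1 else Suc k)"
    using card_flip[OF fin(1)] by (simp add: k_def)
  moreover have "k \<le> n" using card_mono[OF finite_lessThan assms(2)] by (simp add: k_def)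
  moreover have "i \<in> s \<Longrightarrow> k \<ge> 1" "j \<in> s \<Longrightarrow> k \<ge> 1"
    using fin(1) by (auto simp: k_def card_gt_0_iff Suc_le_eq)
  moreover have "i \<in> s \<Longrightarrow> j \<in> s \<Longrightarrow> k \<ge> 2"
    using assms(5) card_mono[OF fin(1), of "{i, j}"] by (simp add: k_def)
  moreover have "i \<notin> s \<Longrightarrow> k < n" "j \<notin> s \<Longrightarrow> k < n"
    using card_less_if_notin[OF assms(2)] assms(3,4) by (auto simp: k_def)
  moreover have "i \<notin> s \<Longrightarrow> j \<notin> s \<Longrightarrow> Suc k < n"
    using card_less_if_notin[of "insert i s" n j] assms fin(1) by (simp add: k_def)
  ultimately show ?thesis
    by (auto intro!: green_step_integral_consecutive[OF assms(1)])
qed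

lemma green_cross_flip_integral:
  assumes "green_step_integral n c"
    and uw: "u \<in> hyp_vertices n" "w \<in> hyp_vertices n" and "i < n" "j < n"
  shows "c * green_cross n u (flip u i) w (flip w j) \<in> \<int>"
proof -
  define s where "s = sym_diff u w"
  have s: "s \<subseteq> {..<n}" using sym_diff_subset_hyp[OF uw] by (simp add: s_def)
  have cross: "green_cross n u (flip u i) w (flip w j)
      = (green_radial n (card (flip (flip s i) j)) - green_radial n (card (flip s i)))
        - (green_radial n (card (flip s j)) - green_radial n (card s))"
    by (simp add: green_cross_def green_def sym_diff_flip_left sym_diff_flip_right s_def)
  show ?thesis
  proof (cases "i = j")
    case True
    then have "c * green_cross n u (flip u i) w (flip w j)
        = - (c * (2 * (green_radial n (card (flip s i)) - green_radial n (card s))))"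
      unfolding cross by (simp add: algebra_simps)
    then show ?thesis
      using green_radial_flip_twice_integral[OF assms(1) s \<open>i < n\<close>] by simp
  next
    case False
    then show ?thesis
      using green_radial_flip_flip_integral[OF assms(1) s \<open>i < n\<close> \<open>j < n\<close>] unfolding cross by simp
  qed
qed

lemma green_cross_add_left: "green_cross n u v w w' + green_cross n v v' w w' = green_cross n u v' w w'"
  by (simp add: green_cross_def)

lemma green_cross_add_right: "green_cross n u v w w' + green_cross n u v w' w'' = green_cross n u v w w''"
  by (simp add: green_cross_def)

lemma green_cross_integral_if_green_step_integral:
  assumes "green_step_integral n c"
  shows "green_cross_integral n c"
proof -
  have adjacent: "c * green_cross n u (flip u i) w w' \<in> \<int>"
    if "u \<in> hyp_vertices n" "i < n" "w \<in> hyp_vertices n" "w' \<in> hyp_vertices n" for u i w w'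
    using that(3,4)
  proof (induction rule: hyp_vertices_path_induct)
    case (step w j)
    show ?case using green_cross_flip_integral[OF assms that(1) step(1) that(2) step(2)] .
  next
    case (trans w w' w'')
    then show ?case using green_cross_add_right[of n u "flip u i" w w' w''] Ints_add
      by (metis distrib_left)
  qed (simp add: green_cross_def)
  have "\<forall>w\<in>hyp_vertices n. \<forall>w'\<in>hyp_vertices n. c * green_cross n u v w w' \<in> \<int>"
    if "u \<in> hyp_vertices n" "v \<in> hyp_vertices n" for u v
    using that
  proof (induction rule: hyp_vertices_path_induct)
    case (refl u)
    show ?case by (simp add: green_cross_def)
  next
    case (step u i)
    then show ?case using adjacent by blast
  next
    case (trans u v v')
    then show ?case using green_cross_add_left[of n u v _ _ v'] Ints_add
      by (metis distrib_left)
  qed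
  then show ?thesis
    unfolding green_cross_integral_def by blast
qed

lemma green_cross_integral_iff_green_step_integral:
  "green_cross_integral n c \<longleftrightarrow> green_step_integral n c"
  using green_cross_integral_if_green_step_integral green_step_integral_if_green_cross_integral by blast

lemma rat_common_denominator:
  fixes A :: "rat set"
  assumes "finite A"
  shows "\<exists>C::nat. C > 0 \<and> (\<forall>q\<in>A. of_nat C * q \<in> \<int>)"
  using assms
proof (induction rule: finite_induct)
  case (insert q A)
  obtain C :: nat where C: "C > 0" "\<forall>p\<in>A. of_nat C * p \<in> \<int>"
    using insert.IH by blast
  obtain a d where ad: "quotient_of q = (a, d)" by fastforce
  have "d > 0" using quotient_of_denom_pos[OF ad] .
  then have "of_int d * q = of_int a"
    using quotient_of_div[OF ad] by simp
  have scale: "of_nat (C * nat d) * p = of_int d * (of_nat C * p)" for p :: rat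
    using \<open>d > 0\<close> by simp
  have "of_nat (C * nat d) * p \<in> \<int>" if "p \<in> insert q A" for p
  proof (cases "p = q")
    case True
    have "of_nat (C * nat d) * q = of_nat C * of_int a"
      unfolding scale using \<open>of_int d * q = of_int a\<close> by (metis mult.left_commute)
    then show ?thesis using True by (metis Ints_mult Ints_of_int Ints_of_nat)
  next
    case False
    then show ?thesis
      unfolding scale using C(2) that by (simp add: Ints_mult)
  qed
  then show ?case using C(1) \<open>d > 0\<close> by (intro exI[of _ "C * nat d"]) simp
qed (rule exI[of _ 1], simp)

lemma ex_green_cross_integral: "\<exists>C::nat. C > 0 \<and> green_cross_integral n (of_nat C)"
proof -
  let ?V = "hyp_vertices n"
  have "finite ((\<lambda>(u, v, w, w'). green_cross n u v w w') ` (?V \<times> ?V \<times> ?V \<times> ?V))"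
    by simp
  from rat_common_denominator[OF this] show ?thesis
    unfolding green_cross_integral_def by fastforce
qed

section \<open>The sandpile group\<close>

lemma lap_green_potential:
  fixes y :: "nat set \<Rightarrow> rat"
  assumes "n \<ge> 1" "u \<in> hyp_vertices n" "(\<Sum>t\<in>hyp_vertices n. y t) = 0"
  shows "lap n (\<lambda>w. (\<Sum>t\<in>hyp_vertices n. y t * green n t w) - K) u = y u"
proof -
  let ?V = "hyp_vertices n"
  have "lap n (\<lambda>w. (\<Sum>t\<in>?V. y t * green n t w) - K) u = (\<Sum>t\<in>?V. y t * lap n (green n t) u)"
    by (rule lap_linear_combination)
  also have "\<dots> = (\<Sum>t\<in>?V. (if u = t then y t else 0) - y t / 2 ^ n)"
  proof (intro sum.cong refl)
    fix t assume "t \<in> ?V"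
    then show "y t * lap n (green n t) u = (if u = t then y t else 0) - y t / 2 ^ n"
      unfolding lap_green[OF assms(1) \<open>t \<in> ?V\<close> assms(2)] by (simp add: right_diff_distrib)
  qed
  also have "\<dots> = y u - (\<Sum>t\<in>?V. y t) / 2 ^ n"
    using assms(2) by (simp add: sum_subtractf sum_divide_distrib)
  finally show ?thesis using assms(3) by simp
qed

lemma lap_pairing_green_diff:
  fixes F :: "nat set \<Rightarrow> rat"
  assumes "n \<ge> 1" "w \<in> hyp_vertices n" "w' \<in> hyp_vertices n"
  shows "(\<Sum>t\<in>hyp_vertices n. lap n F t * (green n w t - green n w' t)) = F w - F w'"
proof -
  let ?V = "hyp_vertices n"
  have "(\<Sum>t\<in>?V. lap n F t * (green n w t - green n w' t))
      = (\<Sum>t\<in>?V. F t * lap n (\<lambda>t. green n w t - green n w' t) t)"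
    by (rule lap_self_adjoint)
  also have "\<dots> = (\<Sum>t\<in>?V. (if t = w then F t else 0) - (if t = w' then F t else 0))"
  proof (intro sum.cong refl)
    fix t assume "t \<in> ?V"
    then show "F t * lap n (\<lambda>t. green n w t - green n w' t) t
        = (if t = w then F t else 0) - (if t = w' then F t else 0)"
      unfolding lap_diff lap_green[OF assms(1,2) \<open>t \<in> ?V\<close>] lap_green[OF assms(1,3) \<open>t \<in> ?V\<close>]
      by (simp add: right_diff_distrib)
  qed
  also have "\<dots> = F w - F w'"
    using assms(2,3) by (simp add: sum_subtractf)
  finally show ?thesis .
qed

lemma sum_eq_0_if_coker_torsion:
  assumes "coker_torsion n x"
  shows "(\<Sum>u\<in>hyp_vertices n. x u) = 0"
proof -
  obtain m :: nat and f where "m > 0" and f: "\<forall>u\<in>hyp_vertices n. int m * x u = hyp_laplacian n f u"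
    using assms unfolding coker_torsion_def in_lap_image_def by blast
  have "int m * (\<Sum>u\<in>hyp_vertices n. x u) = (\<Sum>u\<in>hyp_vertices n. lap n f u)"
    using f by (simp add: sum_distrib_left hyp_laplacian_eq_lap)
  also have "\<dots> = 0" by (rule sum_lap_eq_0)
  finally show ?thesis using \<open>m > 0\<close> by simp
qed

lemma in_lap_image_if_green_cross_integral:
  assumes "n \<ge> 1" "green_cross_integral n (of_nat C)" "(\<Sum>u\<in>hyp_vertices n. x u) = 0"
  shows "in_lap_image n (\<lambda>u. int C * x u)"
proof -
  let ?V = "hyp_vertices n"
  define y :: "nat set \<Rightarrow> rat" where "y t = of_int (int C * x t)" for t
  define K where "K = (\<Sum>t\<in>?V. y t * green n t {})"
  define F where "F w = (\<Sum>t\<in>?V. y t * green n t w) - K" for w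
  have y0: "(\<Sum>t\<in>?V. y t) = 0"
    using assms(3) unfolding y_def by (metis of_int_0 of_int_sum sum_distrib_left mult_zero_right)
  have y_const: "(\<Sum>t\<in>?V. y t * g) = 0" for g
    using y0 by (simp add: sum_distrib_right[symmetric])
  have "F w = (\<Sum>t\<in>?V. of_int (x t) * (of_nat C * green_cross n t {} w {}))" for w
  proof -
    have "(\<Sum>t\<in>?V. of_int (x t) * (of_nat C * green_cross n t {} w {}))
        = (\<Sum>t\<in>?V. y t * green n t w - y t * green n {} w - y t * green n t {} + y t * green n {} {})"
      by (intro sum.cong) (simp_all add: y_def green_cross_def algebra_simps)
    also have "\<dots> = F w"
      by (simp add: sum.distrib sum_subtractf y_const F_def K_def)
    finally show ?thesis ..
  qed
  then have "F w \<in> \<int>" if "w \<in> ?V" for w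
    using assms(2) that empty_in_hyp_vertices unfolding green_cross_integral_def
    by (auto intro!: Ints_sum Ints_mult[OF Ints_of_int])
  then have F: "of_int \<lfloor>F w\<rfloor> = F w" if "w \<in> ?V" for w
    using that by (metis Ints_cases floor_of_int)
  have "int C * x u = lap n (\<lambda>w. \<lfloor>F w\<rfloor>) u" if "u \<in> ?V" for u
  proof -
    have "(of_int (lap n (\<lambda>w. \<lfloor>F w\<rfloor>) u) :: rat) = lap n F u"
      unfolding of_int_lap using F that by (intro lap_cong) auto
    also have "\<dots> = y u"
      unfolding F_def using lap_green_potential[OF assms(1) that y0] .
    finally show ?thesis unfolding y_def of_int_eq_iff ..
  qed
  then show ?thesis
    unfolding in_lap_image_def using hyp_laplacian_eq_lap by metis
qed

lemma coker_torsion_iff_sum_eq_0: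
  assumes "n \<ge> 1"
  shows "coker_torsion n x \<longleftrightarrow> (\<Sum>u\<in>hyp_vertices n. x u) = 0"
proof
  assume "(\<Sum>u\<in>hyp_vertices n. x u) = 0"
  moreover obtain C :: nat where "C > 0" "green_cross_integral n (of_nat C)"
    using ex_green_cross_integral by blast
  ultimately show "coker_torsion n x"
    unfolding coker_torsion_def using in_lap_image_if_green_cross_integral[OF assms] by blast
qed (rule sum_eq_0_if_coker_torsion)

definition annihilates_sandpile :: "nat \<Rightarrow> nat \<Rightarrow> bool" where
  "annihilates_sandpile n C \<longleftrightarrow> (\<forall>x. coker_torsion n x \<longrightarrow> in_lap_image n (\<lambda>u. int C * x u))"

lemma green_cross_integral_if_annihilates_sandpile:
  assumes "n \<ge> 1" "annihilates_sandpile n C"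
  shows "green_cross_integral n (of_nat C)"
  unfolding green_cross_integral_def
proof (intro ballI)
  let ?V = "hyp_vertices n"
  fix u v w w' assume uvww: "u \<in> ?V" "v \<in> ?V" "w \<in> ?V" "w' \<in> ?V"
  define x :: "nat set \<Rightarrow> int" where "x t = (if t = u then 1 else 0) - (if t = v then 1 else 0)" for t
  have "coker_torsion n x"
    using uvww by (simp add: coker_torsion_iff_sum_eq_0[OF assms(1)] x_def sum_subtractf)
  then obtain f where f: "\<forall>t\<in>?V. int C * x t = lap n f t"
    using assms(2) hyp_laplacian_eq_lap unfolding annihilates_sandpile_def in_lap_image_def by metis
  define F :: "nat set \<Rightarrow> rat" where "F t = of_int (f t)" for t
  define h where "h t = green n w t - green n w' t" for t
  have "(\<Sum>t\<in>?V. lap n F t * h t) = (\<Sum>t\<in>?V. of_nat C * ((if t = u then h t else 0) - (if t = v then h t else 0)))"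
  proof (intro sum.cong refl)
    fix t assume "t \<in> ?V"
    then have "lap n F t = of_nat C * of_int (x t)"
      using f unfolding F_def of_int_lap[symmetric] by (metis of_int_mult of_int_of_nat_eq)
    then show "lap n F t * h t = of_nat C * ((if t = u then h t else 0) - (if t = v then h t else 0))"
      by (simp add: x_def right_diff_distrib)
  qed
  also have "\<dots> = of_nat C * green_cross n u v w w'"
    using uvww by (simp add: sum_subtractf sum_distrib_left[symmetric] h_def green_cross_def green_commute)
  finally have "(\<Sum>t\<in>?V. lap n F t * h t) = of_nat C * green_cross n u v w w'" .
  then have "of_nat C * green_cross n u v w w' = of_int (f w - f w')"
    using lap_pairing_green_diff[OF assms(1) uvww(3,4), of F] by (simp add: h_def F_def)
  then show "of_nat C * green_cross n u v w w' \<in> \<int>" by simp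
qed

lemma annihilates_sandpile_iff:
  assumes "n \<ge> 1"
  shows "annihilates_sandpile n C \<longleftrightarrow> green_cross_integral n (of_nat C)"
  using green_cross_integral_if_annihilates_sandpile[OF assms] in_lap_image_if_green_cross_integral[OF assms]
    coker_torsion_iff_sum_eq_0[OF assms]
  unfolding annihilates_sandpile_def by blast

section \<open>Reduction to the first row\<close>

definition half_beta_base_integral :: "nat \<Rightarrow> rat \<Rightarrow> bool" where
  "half_beta_base_integral n c \<longleftrightarrow>
     (\<forall>b. b + 2 \<le> n \<longrightarrow> c * half_beta 0 b \<in> \<int>) \<and> c * (2 * half_beta 0 (n - 1)) \<in> \<int>"

lemma half_beta_integral_below_diagonal:
  "half_beta_base_integral n c \<Longrightarrow> a + b + 2 \<le> n \<Longrightarrow> c * half_beta a b \<in> \<int>"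
proof (induction a arbitrary: b)
  case (Suc a)
  then have "c * half_beta a b - c * half_beta a (Suc b) \<in> \<int>" by simp
  then show ?case by (simp add: right_diff_distrib)
qed (simp add: half_beta_base_integral_def)

lemma half_beta_integral_diagonal:
  "half_beta_base_integral n c \<Longrightarrow> a + b + 1 = n \<Longrightarrow> c * (2 * half_beta a b) \<in> \<int>"
proof (induction a arbitrary: b)
  case (Suc a)
  then have "2 * (c * half_beta a b) - c * (2 * half_beta a (Suc b)) \<in> \<int>"
    using half_beta_integral_below_diagonal[of n c a b] by simp
  then show ?case by (simp add: algebra_simps)
qed (auto simp: half_beta_base_integral_def)

lemma green_step_integral_if_half_beta_base_integral:
  assumes "half_beta_base_integral n c"
  shows "green_step_integral n c"
  unfolding green_step_integral_def
proof (intro conjI allI impI)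
  fix d assume "d < n"
  then show "c * (2 * green_step n d) \<in> \<int>"
    using half_beta_integral_diagonal[OF assms, of d "n - 1 - d"] by (simp add: green_step_def)
next
  fix d assume d: "d + 2 \<le> n"
  then have "n - 1 - d = Suc (n - 2 - d)" "n - 1 - Suc d = n - 2 - d" by auto
  then have "c * (green_step n d - green_step n (Suc d))
      = c * (2 * half_beta d (n - 1 - d)) - c * half_beta d (n - 2 - d)"
    by (simp add: green_step_def algebra_simps)
  moreover have "c * (2 * half_beta d (n - 1 - d)) \<in> \<int>" "c * half_beta d (n - 2 - d) \<in> \<int>"
    using half_beta_integral_diagonal[OF assms] half_beta_integral_below_diagonal[OF assms] d by auto
  ultimately show "c * (green_step n d - green_step n (Suc d)) \<in> \<int>" by simp
qed

lemma half_beta_integral_if_green_step_integral: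
  assumes "green_step_integral n c"
  shows "a + b + 2 \<le> n \<Longrightarrow> c * half_beta a b \<in> \<int>"
proof (induction "n - (a + b + 2)" arbitrary: a b)
  case 0
  then have "n - 1 - a = Suc b" "n - 1 - Suc a = b" by auto
  then have "c * half_beta a b
      = c * (2 * green_step n a) - c * (green_step n a - green_step n (Suc a))"
    by (simp add: green_step_def algebra_simps)
  moreover have "c * (2 * green_step n a) \<in> \<int>" "c * (green_step n a - green_step n (Suc a)) \<in> \<int>"
    using assms 0 unfolding green_step_integral_def by auto
  ultimately show ?case by simp
next
  case (Suc j)
  then have "c * half_beta (Suc a) b + c * half_beta a (Suc b) \<in> \<int>"
    using Suc.hyps(1)[of "Suc a" b] Suc.hyps(1)[of a "Suc b"] by simp
  then show ?case by (simp add: algebra_simps)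
qed

lemma green_step_integral_iff_half_beta_base_integral:
  assumes "n \<ge> 1"
  shows "green_step_integral n c \<longleftrightarrow> half_beta_base_integral n c"
proof
  assume "green_step_integral n c"
  moreover have "n - 1 < n" using assms by simp
  ultimately show "half_beta_base_integral n c"
    unfolding half_beta_base_integral_def
    using half_beta_integral_if_green_step_integral[of n c 0]
    by (auto simp: green_step_integral_def green_step_def)
qed (rule green_step_integral_if_half_beta_base_integral)

section \<open>The binomial sums\<close>

lemma binomial_sum_Suc:
  fixes t :: "nat \<Rightarrow> 'a::comm_semiring_1"
  shows "(\<Sum>i\<le>Suc m. of_nat (Suc m choose i) * t i)
         = (\<Sum>i\<le>m. of_nat (m choose i) * t i) + (\<Sum>i\<le>m. of_nat (m choose i) * t (Suc i))"
proof -
  have "(\<Sum>i\<le>m. of_nat (m choose i) * t i) = (\<Sum>i\<le>Suc m. of_nat (m choose i) * t i)"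
    by (simp add: binomial_eq_0)
  also have "\<dots> = t 0 + (\<Sum>i\<le>m. of_nat (m choose Suc i) * t (Suc i))"
    by (subst sum.atMost_Suc_shift) simp
  finally have "(\<Sum>i\<le>m. of_nat (m choose i) * t i) = t 0 + (\<Sum>i\<le>m. of_nat (m choose Suc i) * t (Suc i))" .
  then show ?thesis
    by (subst sum.atMost_Suc_shift) (simp add: sum.distrib algebra_simps)
qed

definition binomial_mean :: "nat \<Rightarrow> nat \<Rightarrow> rat" where
  "binomial_mean m b = (\<Sum>i=0..m. of_nat (m choose i) / (2 * of_nat (b + i))) / 2 ^ m"

lemma binomial_mean_Suc: "2 * binomial_mean (Suc m) b = binomial_mean m b + binomial_mean m (Suc b)"
  using binomial_sum_Suc[of m "\<lambda>i. 1 / (2 * of_nat (b + i)) :: rat"]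
  by (simp add: binomial_mean_def atLeast0AtMost add_divide_distrib)

lemma binomial_mean_1 [simp]: "binomial_mean m (Suc 0) = half_beta 0 m"
proof -
  have summand: "of_nat (m choose i) / (2 * of_nat (1 + i)) = (of_nat (Suc m choose Suc i) / (2 * of_nat (Suc m)) :: rat)" for i
  proof -
    have "(of_nat (Suc m) * of_nat (m choose i) :: rat) = of_nat (Suc m choose Suc i) * of_nat (Suc i)"
      by (metis Suc_times_binomial_eq of_nat_mult)
    then show ?thesis by (simp add: field_simps)
  qed
  have "(\<Sum>i\<le>m. Suc m choose Suc i) = 2 ^ Suc m - 1"
    using choose_row_sum[of "Suc m"] sum.atMost_Suc_shift[of "\<lambda>i. Suc m choose i" m]
    by (simp del: binomial_Suc_Suc)
  then have "(\<Sum>i\<le>m. (of_nat (Suc m choose Suc i) :: rat)) = 2 ^ Suc m - 1"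
    unfolding of_nat_sum[symmetric] by (simp add: of_nat_diff)
  then have "(\<Sum>i=0..m. of_nat (m choose i) / (2 * of_nat (1 + i)) :: rat) = (2 ^ Suc m - 1) / (2 * of_nat (Suc m))"
    unfolding atLeast0AtMost summand by (simp add: sum_divide_distrib[symmetric])
  then show ?thesis
    by (simp add: binomial_mean_def half_beta.simps(1) divide_divide_eq_left mult_ac)
qed

definition binomial_mean_integral :: "nat \<Rightarrow> rat \<Rightarrow> bool" where
  "binomial_mean_integral n c \<longleftrightarrow>
     (\<forall>m b. m + 2 \<le> n \<longrightarrow> 1 \<le> b \<longrightarrow> m + b \<le> n \<longrightarrow> c * binomial_mean m b \<in> \<int>)"

lemma exp_condition_iff: "exp_condition n C \<longleftrightarrow> C > 0 \<and> binomial_mean_integral n (of_nat C)"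
proof -
  have reindex: "(\<forall>a b. 2 \<le> a \<and> a \<le> n \<and> 1 \<le> b \<and> b \<le> a \<longrightarrow> P (n - a) b)
      \<longleftrightarrow> (\<forall>m b. m + 2 \<le> n \<longrightarrow> 1 \<le> b \<longrightarrow> m + b \<le> n \<longrightarrow> P m b)" for P
  proof safe
    fix m b assume P: "\<forall>a b. 2 \<le> a \<and> a \<le> n \<and> 1 \<le> b \<and> b \<le> a \<longrightarrow> P (n - a) b"
      and "m + 2 \<le> n" "1 \<le> b" "m + b \<le> n"
    then have "2 \<le> n - m \<and> n - m \<le> n \<and> 1 \<le> b \<and> b \<le> n - m" "n - (n - m) = m"
      by auto
    then show "P m b" using P by metis
  qed auto
  have "of_nat C / 2 ^ m * (\<Sum>i=0..m. of_nat (m choose i) / (2 * of_nat (b + i)))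
      = of_nat C * binomial_mean m b" for m b
    by (simp add: binomial_mean_def)
  then show ?thesis
    unfolding exp_condition_def binomial_mean_integral_def
    using reindex[of "\<lambda>m b. of_nat C * binomial_mean m b \<in> \<int>"] by simp
qed

lemma binomial_mean_integral_below_diagonal:
  "half_beta_base_integral n c \<Longrightarrow> m + b + 2 \<le> n \<Longrightarrow> c * binomial_mean m (Suc b) \<in> \<int>"
proof (induction b arbitrary: m)
  case 0
  then show ?case by (simp add: half_beta_base_integral_def)
next
  case (Suc b)
  then have "2 * (c * binomial_mean (Suc m) (Suc b)) - c * binomial_mean m (Suc b) \<in> \<int>"
    using Suc.IH[of "Suc m"] Suc.IH[of m] by simp
  then show ?case
    using binomial_mean_Suc[of m "Suc b"] by (simp add: algebra_simps)
qed

lemma binomial_mean_integral_diagonal: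
  "half_beta_base_integral n c \<Longrightarrow> m + b + 1 = n \<Longrightarrow> c * (2 * binomial_mean m (Suc b)) \<in> \<int>"
proof (induction b arbitrary: m)
  case 0
  then show ?case by (auto simp: half_beta_base_integral_def)
next
  case (Suc b)
  have "c * (2 * binomial_mean (Suc m) (Suc b)) \<in> \<int>" "c * binomial_mean m (Suc b) \<in> \<int>"
    using Suc.IH[of "Suc m"] binomial_mean_integral_below_diagonal[of n c m b] Suc.prems by simp_all
  then have "2 * (c * (2 * binomial_mean (Suc m) (Suc b))) - 2 * (c * binomial_mean m (Suc b)) \<in> \<int>"
    by (intro Ints_diff Ints_mult[OF Ints_numeral])
  then show ?case
    using binomial_mean_Suc[of m "Suc b"] by (simp add: algebra_simps)
qed

lemma binomial_mean_integral_if_half_beta_base_integral: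
  assumes "half_beta_base_integral n c"
  shows "binomial_mean_integral n c"
  unfolding binomial_mean_integral_def
proof (intro allI impI)
  fix m b assume "m + 2 \<le> n" "1 \<le> b" "m + b \<le> n"
  show "c * binomial_mean m b \<in> \<int>"
  proof (cases "m + b + 1 \<le> n")
    case True
    then show ?thesis
      using binomial_mean_integral_below_diagonal[OF assms, of m "b - 1"] \<open>1 \<le> b\<close> by simp
  next
    case False
    define b' where "b' = b - 2"
    have b': "b = Suc (Suc b')" "m + b' + 2 = n"
      using False \<open>m + 2 \<le> n\<close> \<open>m + b \<le> n\<close> by (auto simp: b'_def)
    then have "c * (2 * binomial_mean (Suc m) (Suc b')) - c * binomial_mean m (Suc b') \<in> \<int>"
      using binomial_mean_integral_diagonal[OF assms, of "Suc m" b']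
        binomial_mean_integral_below_diagonal[OF assms, of m b'] by simp
    then show ?thesis
      using b' binomial_mean_Suc[of m "Suc b'"] by (simp add: algebra_simps)
  qed
qed

lemma half_beta_base_integral_if_binomial_mean_integral:
  assumes "binomial_mean_integral n c" "c \<in> \<int>" "n \<ge> 1"
  shows "half_beta_base_integral n c"
  unfolding half_beta_base_integral_def
proof (intro conjI allI impI)
  fix b assume "b + 2 \<le> n"
  then show "c * half_beta 0 b \<in> \<int>"
    using assms(1)[unfolded binomial_mean_integral_def, rule_format, of b 1] by simp
next
  show "c * (2 * half_beta 0 (n - 1)) \<in> \<int>"
  proof (cases "n = 1")
    case True
    then show ?thesis using assms(2) by (simp add: half_beta.simps(1))
  next
    case False
    then have "n - 1 = Suc (n - 2)" "n - 2 + 2 \<le> n" using assms(3) by auto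
    then have "c * (2 * half_beta 0 (n - 1)) = c * binomial_mean (n - 2) 1 + c * binomial_mean (n - 2) 2"
      using binomial_mean_Suc[of "n - 2" 1] by (simp add: algebra_simps numeral_2_eq_2)
    moreover have "c * binomial_mean (n - 2) 1 \<in> \<int>" "c * binomial_mean (n - 2) 2 \<in> \<int>"
      using assms(1)[unfolded binomial_mean_integral_def, rule_format, of "n - 2" 1]
        assms(1)[unfolded binomial_mean_integral_def, rule_format, of "n - 2" 2]
        \<open>n - 2 + 2 \<le> n\<close> by simp_all
    ultimately show ?thesis by simp
  qed
qed

lemma binomial_mean_integral_iff_half_beta_base_integral:
  assumes "n \<ge> 1" "c \<in> \<int>"
  shows "binomial_mean_integral n c \<longleftrightarrow> half_beta_base_integral n c"
  using binomial_mean_integral_if_half_beta_base_integral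
    half_beta_base_integral_if_binomial_mean_integral[OF _ assms(2,1)] by blast

lemma exp_condition_iff_annihilates_sandpile:
  assumes "n \<ge> 1"
  shows "exp_condition n C \<longleftrightarrow> C > 0 \<and> annihilates_sandpile n C"
proof -
  have "binomial_mean_integral n (of_nat C) \<longleftrightarrow> annihilates_sandpile n C"
    by (simp only: binomial_mean_integral_iff_half_beta_base_integral[OF assms Ints_of_nat]
        green_step_integral_iff_half_beta_base_integral[OF assms, symmetric]
        green_cross_integral_iff_green_step_integral[symmetric] annihilates_sandpile_iff[OF assms])
  then show ?thesis by (simp add: exp_condition_iff)
qed

theorem mainTheorem11:
  fixes n :: nat
  assumes "n \<ge> 1"
  shows "exp_condition n (sandpile_exponent n) \<and>
         (\<forall>C. exp_condition n C \<longrightarrow> sandpile_exponent n \<le> C)"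
proof -
  have exponent: "sandpile_exponent n = (LEAST C. exp_condition n C)"
    unfolding sandpile_exponent_def exp_condition_iff_annihilates_sandpile[OF assms]
      annihilates_sandpile_def ..
  obtain C where "C > 0" "green_cross_integral n (of_nat C)"
    using ex_green_cross_integral by blast
  then have "exp_condition n C"
    using exp_condition_iff_annihilates_sandpile[OF assms] annihilates_sandpile_iff[OF assms] by blast
  then show ?thesis
    unfolding exponent using LeastI[of "exp_condition n" C] Least_le[of "exp_condition n"] by blast
qed

end
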